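(* Let $q$ be a power of an odd prime and let $S_j=\{x\in\mathbb F_q^d: x_1^2+\cdots+x_d^2=j\}$ with $j\ne0$. Then: (1) if $d\ge2$ is even, $S_j$ contains an affine subspace $H$ with $|H|=q^{(d-2)/2}$; (2) if $d=4k+1$ ($k$ a positive integer) and $j$ is not a square, $S_j$ contains an affine subspace $H$ with $|H|=q^{(d-3)/2}$; (3) if $d=4k+1$ and $j$ is a square, $S_j$ contains an affine subspace $H$ with $|H|=q^{(d-1)/2}$; (4) if $d=4k-1$ ($k$ a positive integer) and $-j$ is not a square, $S_j$ contains an affine subspace $H$ with $|H|=q^{(d-3)/2}$; (5) if $d=4k-1$ and $-j$ is a square, $S_j$ contains an affine subspace $H$ with $|H|=q^{(d-1)/2}$.
   Context: Squares refer to squares in $\mathbb F_q^*$. *)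

theory Defs
  imports "HOL-Analysis.Analysis"
begin

definition fsubspace :: "('a::field ^ 'n) set \<Rightarrow> bool" where
  "fsubspace W \<longleftrightarrow> 0 \<in> W \<and> (\<forall>x\<in>W. \<forall>y\<in>W. x + y \<in> W)
     \<and> (\<forall>c::'a. \<forall>x\<in>W. (\<chi> i. c * x $ i) \<in> W)"

definition faffine_subspace :: "('a::field ^ 'n) set \<Rightarrow> bool" where
  "faffine_subspace H \<longleftrightarrow> (\<exists>v W. fsubspace W \<and> H = (\<lambda>w. v + w) ` W)"

definition fsphere :: "'a::field \<Rightarrow> ('a ^ 'n) set" where
  "fsphere j = {x. (\<Sum>i\<in>UNIV. (x $ i)^2) = j}"

definition nonzero_square :: "'a::field \<Rightarrow> bool" where
  "nonzero_square a \<longleftrightarrow> (\<exists>y. y \<noteq> 0 \<and> y^2 = a)"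

end

theory Submission
  imports Defs
begin

(* Since q is odd, -1 = a^2 + b^2 for some a, b. Then (1, 0, a, b) and (0, 1, b, -a) span a
   totally isotropic plane of F^4, and (1, a, b) is isotropic and orthogonal to (0, b, -a),
   so the line (s, c b + s a, - c a + s b) lies on the sphere of radius -c^2 in F^3.
   Flats on spheres combine under orthogonal direct sums, adding radii and dimensions.
   So F^d is split into blocks of four, each contributing two dimensions at radius 0, and a
   remainder of length 1 to 5 carrying a point (x^2 + y^2 = j, or y^2 = j) or such a line
   plus possibly a point (e^2 - c^2 = j, or c^2 = -j). *)

lemma card_le_twice_card_squares:
  assumes "finite (UNIV :: 'a::idom set)"
  shows "CARD('a) \<le> 2 * card (range (\<lambda>x::'a. x^2))"
proof -
  have "UNIV = (\<Union>s\<in>range (\<lambda>x::'a. x^2). {x. x^2 = s})"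
    by auto
  then have "CARD('a) = card (\<Union>s\<in>range (\<lambda>x::'a. x^2). {x. x^2 = s})"
    by simp
  also have "\<dots> \<le> (\<Sum>s\<in>range (\<lambda>x::'a. x^2). card {x. x^2 = s})"
    by (rule card_UN_le) (use assms in simp)
  also have "\<dots> \<le> (\<Sum>s\<in>range (\<lambda>x::'a. x^2). 2)"
  proof (rule sum_mono)
    fix s assume "s \<in> range (\<lambda>x::'a. x^2)"
    then obtain r where "s = r^2" by auto
    then have "{x. x^2 = s} \<subseteq> {r, -r}" by (auto simp: power2_eq_iff)
    then have "card {x. x^2 = s} \<le> card {r, -r}" by (intro card_mono) auto
    also have "\<dots> \<le> 2" by (simp add: card_insert_if)
    finally show "card {x. x^2 = s} \<le> 2" .
  qed
  finally show ?thesis by (simp add: mult.commute)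
qed

text \<open>At least (q + 1)/2 elements are squares and as many are of the form z - c y^2,
  so the two sets meet.\<close>

lemma ex_square_plus_scaled_square:
  fixes c z :: "'a::field"
  assumes fin: "finite (UNIV :: 'a set)" and odd: "odd CARD('a)" and c: "c \<noteq> 0"
  shows "\<exists>x y. x^2 + c * y^2 = z"
proof -
  define S where "S = range (\<lambda>x::'a. x^2)"
  define A where "A = (\<lambda>w. z - c * w) ` S"
  have "finite S" using fin unfolding S_def by simp
  have "CARD('a) + 1 \<le> 2 * card S"
    using card_le_twice_card_squares[OF fin] odd unfolding S_def by presburger
  moreover have "card A = card S"
    unfolding A_def using c by (intro card_image) (auto simp: inj_on_def)
  moreover have "card (S \<union> A) \<le> CARD('a)"
    using fin by (simp add: card_mono)
  ultimately have "S \<inter> A \<noteq> {}"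
    using \<open>finite S\<close> card_Un_disjoint[of S A] unfolding A_def by force
  then obtain x y where "x^2 = z - c * y^2"
    unfolding S_def A_def by auto
  then show ?thesis by (auto simp: algebra_simps)
qed

lemma sum_lessThan_add:
  fixes f :: "nat \<Rightarrow> 'a::comm_monoid_add"
  shows "(\<Sum>k<p + p'. f k) = (\<Sum>k<p. f k) + (\<Sum>k<p'. f (p + k))"
  by (induction p') (simp_all add: add.assoc)

definition vanishing_from :: "nat \<Rightarrow> (nat \<Rightarrow> 'a::zero) set" where
  "vanishing_from m = {t. \<forall>r\<ge>m. t r = 0}"

lemma card_vanishing_from:
  assumes "finite (UNIV :: 'a::zero set)"
  shows "card (vanishing_from m :: (nat \<Rightarrow> 'a) set) = CARD('a) ^ m"
proof -
  have "bij_betw (\<lambda>t. restrict t {..<m}) (vanishing_from m) ({..<m} \<rightarrow>\<^sub>E (UNIV :: 'a set))"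
    by (rule bij_betwI[where g = "\<lambda>f r. if r < m then f r else 0"])
       (auto simp: vanishing_from_def fun_eq_iff PiE_def extensional_def)
  then show ?thesis
    by (simp add: bij_betw_same_card card_PiE)
qed

lemma fsubspace_linear_image:
  fixes F :: "(nat \<Rightarrow> 'a::field) \<Rightarrow> 'a ^ 'n"
  assumes add: "\<And>t t'. F (\<lambda>r. t r + t' r) = F t + F t'"
    and scale: "\<And>c t. F (\<lambda>r. c * t r) = (\<chi> i. c * F t $ i)"
  shows "fsubspace (F ` vanishing_from m)"
  unfolding fsubspace_def
proof (intro conjI ballI allI)
  have "F (\<lambda>r. 0) = 0"
    using scale[of 0 "\<lambda>r. 0"] by (simp add: vec_eq_iff)
  moreover have "(\<lambda>r. 0) \<in> vanishing_from m"
    by (simp add: vanishing_from_def)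
  ultimately show "0 \<in> F ` vanishing_from m"
    by (metis image_eqI)
next
  fix x y assume "x \<in> F ` vanishing_from m" "y \<in> F ` vanishing_from m"
  then obtain t t' where "t \<in> vanishing_from m" "t' \<in> vanishing_from m" "x = F t" "y = F t'"
    by blast
  then have "(\<lambda>r. t r + t' r) \<in> vanishing_from m" "x + y = F (\<lambda>r. t r + t' r)"
    by (simp_all add: vanishing_from_def add)
  then show "x + y \<in> F ` vanishing_from m"
    by (metis image_eqI)
next
  fix c x assume "x \<in> F ` vanishing_from m"
  then obtain t where "t \<in> vanishing_from m" "x = F t"
    by blast
  then have "(\<lambda>r. c * t r) \<in> vanishing_from m" "(\<chi> i. c * x $ i) = F (\<lambda>r. c * t r)"
    by (simp_all add: vanishing_from_def scale)
  then show "(\<chi> i. c * x $ i) \<in> F ` vanishing_from m"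
    by (metis image_eqI)
qed

lemma inj_on_vanishing_from:
  fixes F :: "(nat \<Rightarrow> 'a::zero) \<Rightarrow> 'a ^ 'n"
  assumes pivot: "\<And>r. r < m \<Longrightarrow> \<exists>i. \<forall>t. F t $ i = t r"
  shows "inj_on F (vanishing_from m)"
proof (rule inj_onI)
  fix t t' assume "t \<in> vanishing_from m" "t' \<in> vanishing_from m" and eq: "F t = F t'"
  show "t = t'"
  proof
    fix r show "t r = t' r"
    proof (cases "r < m")
      case True
      then obtain i where "\<forall>t. F t $ i = t r" using pivot by blast
      then show ?thesis using eq by metis
    next
      case False
      then show ?thesis using \<open>t \<in> vanishing_from m\<close> \<open>t' \<in> vanishing_from m\<close>
        by (simp add: vanishing_from_def)
    qed
  qed
qed

text \<open>The points v + L t, for parameters t vanishing from m on, form a flat contained in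
  the sphere of radius j of F^p, with coordinates indexed by 0, ..., p - 1. The pivot
  coordinates read off the parameters, so the flat has exactly q^m points.\<close>

definition sphere_flat :: "nat \<Rightarrow> 'a::field \<Rightarrow> nat \<Rightarrow> bool" where
  "sphere_flat p j m \<longleftrightarrow> (\<exists>v L.
     (\<forall>t t' k. L (\<lambda>r. t r + t' r) k = L t k + L t' k) \<and> (\<forall>c t k. L (\<lambda>r. c * t r) k = c * L t k)
     \<and> (\<forall>r<m. \<exists>k<p. \<forall>t. L t k = t r) \<and> (\<forall>t. (\<Sum>k<p. (v k + L t k)^2) = j))"

lemma ex_faffine_subspace_in_fsphere:
  assumes fin: "finite (UNIV :: 'a::field set)" and flat: "sphere_flat CARD('n) j m"
  shows "\<exists>H::('a ^ 'n) set. faffine_subspace H \<and> H \<subseteq> fsphere j \<and> card H = CARD('a) ^ m"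
proof -
  obtain v L where
    add: "\<And>t t' k. L (\<lambda>r. t r + t' r) k = L t k + L t' k" and
    scale: "\<And>c t k. L (\<lambda>r. c * t r) k = c * L t k" and
    pivot: "\<And>r. r < m \<Longrightarrow> \<exists>k<CARD('n). \<forall>t. L t k = t r" and
    sphere: "\<And>t. (\<Sum>k<CARD('n). (v k + L t k)^2) = j"
    using flat unfolding sphere_flat_def by blast
  obtain e :: "'n \<Rightarrow> nat" where e: "bij_betw e UNIV {..<CARD('n)}"
    using ex_bij_betw_finite_nat[of "UNIV :: 'n set"] by (auto simp: atLeast0LessThan)
  define F where "F t = (\<chi> i. L t (e i))" for t
  define base where "base = (\<chi> i. v (e i))"
  define H where "H = (\<lambda>t. base + F t) ` vanishing_from m"
  have "fsubspace (F ` vanishing_from m)"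
    by (rule fsubspace_linear_image) (simp_all add: F_def vec_eq_iff add scale)
  then have "faffine_subspace H"
    unfolding faffine_subspace_def H_def
    by (intro exI[of _ base] exI[of _ "F ` vanishing_from m"]) (simp add: image_image)
  moreover have "H \<subseteq> fsphere j"
  proof
    fix x assume "x \<in> H"
    then obtain t where "x = base + F t" unfolding H_def by blast
    then have "(\<Sum>i\<in>UNIV. (x $ i)^2) = (\<Sum>i\<in>UNIV. (v (e i) + L t (e i))^2)"
      by (simp add: base_def F_def)
    also have "\<dots> = j"
      using sum.reindex_bij_betw[OF e, of "\<lambda>k. (v k + L t k)^2"] sphere by simp
    finally show "x \<in> fsphere j" unfolding fsphere_def by simp
  qed
  moreover have "inj_on F (vanishing_from m)"
  proof (rule inj_on_vanishing_from)
    fix r assume "r < m"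
    then obtain k where "k < CARD('n)" "\<forall>t. L t k = t r" using pivot by blast
    moreover have "k \<in> range e"
      using bij_betw_imp_surj_on[OF e] \<open>k < CARD('n)\<close> by simp
    then obtain i where "e i = k"
      by blast
    ultimately show "\<exists>i. \<forall>t. F t $ i = t r" unfolding F_def by auto
  qed
  then have "inj_on (\<lambda>t. base + F t) (vanishing_from m)"
    by (simp add: inj_on_def)
  then have "card H = CARD('a) ^ m"
    unfolding H_def using card_vanishing_from[OF fin] by (simp add: card_image)
  ultimately show ?thesis by blast
qed

lemma sphere_flat_direct_sum:
  assumes "sphere_flat p j m" and "sphere_flat p' j' m'"
  shows "sphere_flat (p + p') (j + j') (m + m')"
proof -
  obtain v L where
    add: "\<And>t t' k. L (\<lambda>r. t r + t' r) k = L t k + L t' k" and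
    scale: "\<And>c t k. L (\<lambda>r. c * t r) k = c * L t k" and
    pivot: "\<And>r. r < m \<Longrightarrow> \<exists>k<p. \<forall>t. L t k = t r" and
    sphere: "\<And>t. (\<Sum>k<p. (v k + L t k)^2) = j"
    using assms(1) unfolding sphere_flat_def by blast
  obtain v' L' where
    add': "\<And>t t' k. L' (\<lambda>r. t r + t' r) k = L' t k + L' t' k" and
    scale': "\<And>c t k. L' (\<lambda>r. c * t r) k = c * L' t k" and
    pivot': "\<And>r. r < m' \<Longrightarrow> \<exists>k<p'. \<forall>t. L' t k = t r" and
    sphere': "\<And>t. (\<Sum>k<p'. (v' k + L' t k)^2) = j'"
    using assms(2) unfolding sphere_flat_def by blast
  define w where "w k = (if k < p then v k else v' (k - p))" for k
  define M where "M t k = (if k < p then L t k else L' (\<lambda>r. t (m + r)) (k - p))" for t k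
  have "\<exists>k<p + p'. \<forall>t. M t k = t r" if "r < m + m'" for r
  proof (cases "r < m")
    case True
    then obtain k where "k < p" "\<forall>t. L t k = t r"
      using pivot by blast
    then show ?thesis
      by (intro exI[of _ k]) (simp add: M_def)
  next
    case False
    then have "r - m < m'"
      using \<open>r < m + m'\<close> by simp
    then obtain k where "k < p'" "\<forall>t. L' t k = t (r - m)"
      using pivot' by blast
    then show ?thesis using False
      by (intro exI[of _ "p + k"]) (simp add: M_def)
  qed
  moreover have "(\<Sum>k<p + p'. (w k + M t k)^2) = j + j'" for t
    using sphere[of t] sphere'[of "\<lambda>r. t (m + r)"]
    by (simp add: sum_lessThan_add w_def M_def)
  ultimately show ?thesis
    unfolding sphere_flat_def
    by (intro exI[of _ w] exI[of _ M]) (simp add: M_def add add' scale scale')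
qed

lemma sphere_flat_point: "sphere_flat 1 (y^2) 0"
  unfolding sphere_flat_def by (intro exI[of _ "\<lambda>k. y"] exI[of _ "\<lambda>t k. 0"]) simp

lemma sphere_flat_isotropic_block:
  fixes a b :: "'a::field"
  assumes ab: "a^2 + b^2 = -1"
  shows "sphere_flat 4 (0::'a) 2"
proof -
  define L where "L t k = [1, 0, a, b] ! k * t 0 + [0, 1, b, -a] ! k * t 1" for t :: "nat \<Rightarrow> 'a" and k
  have "(\<Sum>k<4. (0 + L t k)^2) = (1 + (a^2 + b^2)) * ((t 0)^2 + (t 1)^2)" for t
    by (simp add: L_def eval_nat_numeral power2_eq_square algebra_simps)
  then have "(\<Sum>k<4. (0 + L t k)^2) = 0" for t
    using ab by simp
  moreover have "\<exists>k<4. \<forall>t. L t k = t r" if "r < 2" for r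
    using that by (intro exI[of _ r]) (auto simp: L_def less_2_cases_iff)
  ultimately show ?thesis
    unfolding sphere_flat_def
    by (intro exI[of _ "\<lambda>k. 0"] exI[of _ L]) (simp add: L_def algebra_simps)
qed

lemma sphere_flat_isotropic_line:
  fixes a b c :: "'a::field"
  assumes ab: "a^2 + b^2 = -1"
  shows "sphere_flat 3 (- (c^2)) 1"
proof -
  define v where "v k = [0, c * b, - c * a] ! k" for k
  define L where "L t k = [1, a, b] ! k * t 0" for t :: "nat \<Rightarrow> 'a" and k
  have "(\<Sum>k<3. (v k + L t k)^2) = (1 + (a^2 + b^2)) * (t 0)^2 + c^2 * (a^2 + b^2)" for t
    by (simp add: v_def L_def eval_nat_numeral power2_eq_square algebra_simps)
  then have "(\<Sum>k<3. (v k + L t k)^2) = - (c^2)" for t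
    using ab by simp
  moreover have "\<exists>k<3. \<forall>t. L t k = t r" if "r < 1" for r
    using that by (intro exI[of _ 0]) (simp add: L_def)
  ultimately show ?thesis
    unfolding sphere_flat_def
    by (intro exI[of _ v] exI[of _ L]) (auto simp: L_def algebra_simps)
qed

lemma sphere_flat_isotropic_blocks:
  fixes a b :: "'a::field"
  assumes ab: "a^2 + b^2 = -1"
  shows "sphere_flat (4 * N) (0::'a) (2 * N)"
proof (induction N)
  case 0
  show ?case
    unfolding sphere_flat_def by (intro exI[of _ "\<lambda>k. 0"] exI[of _ "\<lambda>t k. 0"]) simp
next
  case (Suc N)
  from sphere_flat_direct_sum[OF sphere_flat_isotropic_block[OF ab] Suc]
  show ?case by simp
qed

lemma sphere_flat_any_radius:
  fixes j :: "'a::field"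
  assumes fin: "finite (UNIV :: 'a set)" and q_odd: "odd CARD('a)" and "2 \<le> d"
  shows "sphere_flat d j ((d - 2) div 2)"
proof -
  obtain a b :: 'a where ab: "a^2 + b^2 = -1"
    using ex_square_plus_scaled_square[OF fin q_odd, of 1 "-1"] by auto
  obtain x y :: 'a where xy: "x^2 + y^2 = j"
    using ex_square_plus_scaled_square[OF fin q_odd, of 1 j] by auto
  obtain c e :: 'a where ce: "- (c^2) + e^2 = j"
    using ex_square_plus_scaled_square[OF fin q_odd, of "-1" j] by (auto simp: algebra_simps)
  define N where "N = (d - 2) div 4"
  have "d = 1 + 1 + 4 * N \<and> (d - 2) div 2 = 0 + 0 + 2 * N
      \<or> d = 1 + 1 + 1 + 4 * N \<and> (d - 2) div 2 = 0 + 0 + 0 + 2 * N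
      \<or> d = 3 + 1 + 4 * N \<and> (d - 2) div 2 = 1 + 0 + 2 * N
      \<or> d = 3 + 1 + 1 + 4 * N \<and> (d - 2) div 2 = 1 + 0 + 0 + 2 * N"
    using \<open>2 \<le> d\<close> unfolding N_def by presburger
  moreover have "sphere_flat (1 + 1 + 4 * N) (x^2 + y^2 + 0) (0 + 0 + 2 * N)"
    by (intro sphere_flat_direct_sum sphere_flat_point sphere_flat_isotropic_blocks[OF ab])
  moreover have "sphere_flat (1 + 1 + 1 + 4 * N) (x^2 + y^2 + 0^2 + 0) (0 + 0 + 0 + 2 * N)"
    by (intro sphere_flat_direct_sum sphere_flat_point sphere_flat_isotropic_blocks[OF ab])
  moreover have "sphere_flat (3 + 1 + 4 * N) (- (c^2) + e^2 + 0) (1 + 0 + 2 * N)"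
    by (intro sphere_flat_direct_sum sphere_flat_isotropic_line[OF ab] sphere_flat_point
        sphere_flat_isotropic_blocks[OF ab])
  moreover have "sphere_flat (3 + 1 + 1 + 4 * N) (- (c^2) + e^2 + 0^2 + 0) (1 + 0 + 0 + 2 * N)"
    by (intro sphere_flat_direct_sum sphere_flat_isotropic_line[OF ab] sphere_flat_point
        sphere_flat_isotropic_blocks[OF ab])
  ultimately show ?thesis
    using xy ce by auto
qed

lemma sphere_flat_of_square:
  fixes a b y j :: "'a::field"
  assumes ab: "a^2 + b^2 = -1" and "y^2 = j" and "d mod 4 = 1"
  shows "sphere_flat d j ((d - 1) div 2)"
proof -
  have "sphere_flat (1 + 4 * (d div 4)) (y^2 + 0) (0 + 2 * (d div 4))"
    by (intro sphere_flat_direct_sum sphere_flat_point sphere_flat_isotropic_blocks[OF ab])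
  moreover have "1 + 4 * (d div 4) = d" "0 + 2 * (d div 4) = (d - 1) div 2"
    using assms(3) by presburger+
  ultimately show ?thesis using assms(2) by simp
qed

lemma sphere_flat_of_neg_square:
  fixes a b y j :: "'a::field"
  assumes ab: "a^2 + b^2 = -1" and "y^2 = - j" and "d mod 4 = 3"
  shows "sphere_flat d j ((d - 1) div 2)"
proof -
  have "sphere_flat (3 + 4 * (d div 4)) (- (y^2) + 0) (1 + 2 * (d div 4))"
    by (intro sphere_flat_direct_sum sphere_flat_isotropic_line[OF ab] sphere_flat_isotropic_blocks[OF ab])
  moreover have "3 + 4 * (d div 4) = d" "1 + 2 * (d div 4) = (d - 1) div 2"
    using assms(3) by presburger+
  ultimately show ?thesis using assms(2) by simp
qed

theorem lemma1p13:
  fixes j :: "'a::field"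
  assumes fin: "finite (UNIV :: 'a set)"
    and q_odd: "odd (CARD('a))"
    and j0: "j \<noteq> 0"
  shows
   "(even CARD('n) \<and> CARD('n) \<ge> 2 \<longrightarrow>
       (\<exists>H::('a ^ 'n) set. faffine_subspace H \<and> H \<subseteq> fsphere j
          \<and> card H = CARD('a) ^ ((CARD('n) - 2) div 2)))
  \<and> (\<forall>k::nat. k \<ge> 1 \<and> CARD('n) = 4*k+1 \<and> \<not> nonzero_square j \<longrightarrow>
       (\<exists>H::('a ^ 'n) set. faffine_subspace H \<and> H \<subseteq> fsphere j
          \<and> card H = CARD('a) ^ ((CARD('n) - 3) div 2)))
  \<and> (\<forall>k::nat. k \<ge> 1 \<and> CARD('n) = 4*k+1 \<and> nonzero_square j \<longrightarrow>
       (\<exists>H::('a ^ 'n) set. faffine_subspace H \<and> H \<subseteq> fsphere j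
          \<and> card H = CARD('a) ^ ((CARD('n) - 1) div 2)))
  \<and> (\<forall>k::nat. k \<ge> 1 \<and> CARD('n) = 4*k-1 \<and> \<not> nonzero_square (-j) \<longrightarrow>
       (\<exists>H::('a ^ 'n) set. faffine_subspace H \<and> H \<subseteq> fsphere j
          \<and> card H = CARD('a) ^ ((CARD('n) - 3) div 2)))
  \<and> (\<forall>k::nat. k \<ge> 1 \<and> CARD('n) = 4*k-1 \<and> nonzero_square (-j) \<longrightarrow>
       (\<exists>H::('a ^ 'n) set. faffine_subspace H \<and> H \<subseteq> fsphere j
          \<and> card H = CARD('a) ^ ((CARD('n) - 1) div 2)))"
proof -
  obtain a b :: 'a where ab: "a^2 + b^2 = -1"
    using ex_square_plus_scaled_square[OF fin q_odd, of 1 "-1"] by auto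
  let ?flat = "\<lambda>m. \<exists>H::('a ^ 'n) set. faffine_subspace H \<and> H \<subseteq> fsphere j \<and> card H = CARD('a) ^ m"
  have flat: "?flat m" if "sphere_flat CARD('n) j m" for m
    using ex_faffine_subspace_in_fsphere[OF fin that] .
  have any_radius: "?flat m" if "2 \<le> CARD('n)" "m = (CARD('n) - 2) div 2" for m
    using that by (intro flat) (simp add: sphere_flat_any_radius[OF fin q_odd])
  show ?thesis
  proof (intro conjI allI impI)
    assume "even CARD('n) \<and> CARD('n) \<ge> 2"
    then show "?flat ((CARD('n) - 2) div 2)"
      by (intro any_radius) simp_all
  next
    fix k :: nat assume "k \<ge> 1 \<and> CARD('n) = 4 * k + 1 \<and> \<not> nonzero_square j"
    then have "k \<ge> 1" "CARD('n) = 4 * k + 1" by simp_all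
    then show "?flat ((CARD('n) - 3) div 2)"
      by (intro any_radius) presburger+
  next
    fix k :: nat assume k: "k \<ge> 1 \<and> CARD('n) = 4 * k + 1 \<and> nonzero_square j"
    then obtain y where "y^2 = j"
      unfolding nonzero_square_def by auto
    with k show "?flat ((CARD('n) - 1) div 2)"
      by (intro flat sphere_flat_of_square[OF ab]) auto
  next
    fix k :: nat assume "k \<ge> 1 \<and> CARD('n) = 4 * k - 1 \<and> \<not> nonzero_square (- j)"
    then have "k \<ge> 1" "CARD('n) = 4 * k - 1" by simp_all
    then show "?flat ((CARD('n) - 3) div 2)"
      by (intro any_radius) presburger+
  next
    fix k :: nat assume k: "k \<ge> 1 \<and> CARD('n) = 4 * k - 1 \<and> nonzero_square (- j)"
    then obtain y where "y^2 = - j"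
      unfolding nonzero_square_def by auto
    moreover from k have "CARD('n) = 4 * (k - 1) + 3"
      by auto
    ultimately show "?flat ((CARD('n) - 1) div 2)"
      by (intro flat sphere_flat_of_neg_square[OF ab]) auto
  qed
qed

end
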